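(* Let $k\ge2$ and let $C$ be the balanced double $A_{2k+1}$-curve. For every $m\ge2$ the multiplication map $\operatorname{Sym}^m\mathrm{H}^0(C,\omega_C)\to\mathrm{H}^0(C,\omega_C^m)$ is surjective, and $h^0(C,\omega_C^m)=(2m-1)(2k-1)$.
   Context: Let $C_0,C_1,C_2$ be three copies of $\mathbb{P}^1$ with coordinate $u_i$ at $0$ and $v_i=1/u_i$ at $\infty$. The balanced double $A_{2k+1}$-curve $C$ (arithmetic genus $2k$) is obtained by gluing $C_0\setminus\{0\}$ and $C_1\setminus\{\infty\}$ into $\operatorname{Spec}$ of the subring of $\mathbb{C}[v_0]\times\mathbb{C}[u_1]$ generated by $(v_0,u_1)$ and $(v_0^{k+1},-u_1^{k+1})$, and $C_1\setminus\{0\}$ and $C_2\setminus\{\infty\}$ into $\operatorname{Spec}$ of the subring of $\mathbb{C}[v_1]\times\mathbb{C}[u_2]$ generated by $(v_1,u_2)$ and $(v_1^{k+1},-u_2^{k+1})$; $\omega_C$ is its dualizing sheaf. *)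

theory Defs
  imports Complex_Main "HOL-Library.Function_Algebras" "HOL-Library.Product_Plus"
begin

text \<open>A Laurent polynomial in one variable over the complex numbers is represented
by its coefficient function (coefficient of the n-th power), with finite support.\<close>

type_synonym lpoly = "int \<Rightarrow> complex"

definition is_lpoly :: "lpoly \<Rightarrow> bool" where
  "is_lpoly f \<longleftrightarrow> finite {n. f n \<noteq> 0}"

definition lmul :: "lpoly \<Rightarrow> lpoly \<Rightarrow> lpoly" where
  "lmul f g = (\<lambda>n. \<Sum>i\<in>{i. f i \<noteq> 0}. f i * g (n - i))"

definition lone :: lpoly where "lone = (\<lambda>n. if n = 0 then 1 else 0)"

definition lconst :: "complex \<Rightarrow> lpoly" where "lconst c = (\<lambda>n. if n = 0 then c else 0)"

definition lX :: "nat \<Rightarrow> lpoly" where "lX j = (\<lambda>n. if n = int j then 1 else 0)"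

text \<open>Residue of the meromorphic differential f(t) dt at t = 0.\<close>
definition lres :: "lpoly \<Rightarrow> complex" where "lres f = f (-1)"

text \<open>An m-differential g(u) du^m on a copy of P^1, written in the coordinate v = 1/u
at infinity: g(1/v) (-1)^m v^(-2m) dv^m.\<close>
definition at_inf :: "nat \<Rightarrow> lpoly \<Rightarrow> lpoly" where
  "at_inf m g = (\<lambda>n. (-1) ^ m * g (- n - 2 * int m))"

text \<open>Pairs of germs on the two branches through a singular point.\<close>
definition pmul :: "lpoly \<times> lpoly \<Rightarrow> lpoly \<times> lpoly \<Rightarrow> lpoly \<times> lpoly" where
  "pmul x y = (lmul (fst x) (fst y), lmul (snd x) (snd y))"

text \<open>The coordinate ring of the affine neighbourhood of a singular point: the
subring (C-subalgebra) of C[v] x C[u] generated by (v,u) and (v^(k+1), -u^(k+1)).\<close>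
inductive_set sing_ring :: "nat \<Rightarrow> (lpoly \<times> lpoly) set" for k :: nat where
  const: "(lconst c, lconst c) \<in> sing_ring k"
| gen1: "(lX 1, lX 1) \<in> sing_ring k"
| gen2: "(lX (k + 1), - lX (k + 1)) \<in> sing_ring k"
| add: "x \<in> sing_ring k \<Longrightarrow> y \<in> sing_ring k \<Longrightarrow> x + y \<in> sing_ring k"
| mul: "x \<in> sing_ring k \<Longrightarrow> y \<in> sing_ring k \<Longrightarrow> pmul x y \<in> sing_ring k"

text \<open>Sections of the dualizing sheaf over that affine neighbourhood (Rosenlicht):
pairs of meromorphic differentials (a(v) dv, b(u) du), regular away from the
singular point, such that res(f a dv) + res(g b du) = 0 for every (f,g) in the ring.\<close>
definition sing_omega :: "nat \<Rightarrow> (lpoly \<times> lpoly) set" where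
  "sing_omega k = {(a, b). is_lpoly a \<and> is_lpoly b \<and>
      (\<forall>(f, g) \<in> sing_ring k. lres (lmul f a) + lres (lmul g b) = 0)}"

definition pprod :: "(lpoly \<times> lpoly) list \<Rightarrow> lpoly \<times> lpoly" where
  "pprod xs = foldr pmul xs (lone, lone)"

text \<open>Sections of the m-th power of the dualizing sheaf over that neighbourhood: the
module over the ring generated by products of m sections of the dualizing sheaf.\<close>
inductive_set sing_omega_pow :: "nat \<Rightarrow> nat \<Rightarrow> (lpoly \<times> lpoly) set" for k m :: nat where
  zero: "0 \<in> sing_omega_pow k m"
| add: "x \<in> sing_omega_pow k m \<Longrightarrow> y \<in> sing_omega_pow k m \<Longrightarrow> x + y \<in> sing_omega_pow k m"
| gen: "r \<in> sing_ring k \<Longrightarrow> length xs = m \<Longrightarrow> set xs \<subseteq> sing_omega k \<Longrightarrow>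
         pmul r (pprod xs) \<in> sing_omega_pow k m"

text \<open>Global sections H^0(C, omega_C^m): triples (g_0(u_0) du_0^m, g_1(u_1) du_1^m,
g_2(u_2) du_2^m) of rational m-differentials on C_0, C_1, C_2, regular away from the
glued points (hence Laurent polynomials), regular at the smooth points 0 of C_0 and
infinity of C_2, and lying in omega^m near the two singular points
(v_0 = 0 ~ u_1 = 0 and v_1 = 0 ~ u_2 = 0).\<close>
definition H0_omega_pow :: "nat \<Rightarrow> nat \<Rightarrow> (lpoly \<times> lpoly \<times> lpoly) set" where
  "H0_omega_pow k m = {(g0, g1, g2).
      is_lpoly g0 \<and> is_lpoly g1 \<and> is_lpoly g2 \<and>
      (\<forall>n<0. g0 n = 0) \<and> (\<forall>n<0. at_inf m g2 n = 0) \<and>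
      (at_inf m g0, g1) \<in> sing_omega_pow k m \<and>
      (at_inf m g1, g2) \<in> sing_omega_pow k m}"

definition tmul :: "lpoly \<times> lpoly \<times> lpoly \<Rightarrow> lpoly \<times> lpoly \<times> lpoly \<Rightarrow> lpoly \<times> lpoly \<times> lpoly" where
  "tmul x y = (case x of (a0, a1, a2) \<Rightarrow> case y of (b0, b1, b2) \<Rightarrow>
      (lmul a0 b0, lmul a1 b1, lmul a2 b2))"

definition tprod :: "(lpoly \<times> lpoly \<times> lpoly) list \<Rightarrow> lpoly \<times> lpoly \<times> lpoly" where
  "tprod xs = foldr tmul xs (lone, lone, lone)"

definition tscale :: "complex \<Rightarrow> lpoly \<times> lpoly \<times> lpoly \<Rightarrow> lpoly \<times> lpoly \<times> lpoly" where
  "tscale c x = (case x of (a0, a1, a2) \<Rightarrow>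
      ((\<lambda>n. c * a0 n), (\<lambda>n. c * a1 n), (\<lambda>n. c * a2 n)))"

text \<open>Image of Sym^m H^0(omega) in H^0(omega^m): products of m global sections.\<close>
definition mult_image :: "nat \<Rightarrow> nat \<Rightarrow> (lpoly \<times> lpoly \<times> lpoly) set" where
  "mult_image k m = {tprod xs | xs. length xs = m \<and> set xs \<subseteq> H0_omega_pow k 1}"

end

theory Submission
  imports Defs
begin

text \<open>Near a node, pairing by residues against the ring generated by \<open>(v, u)\<close> and
\<open>(v^(k+1), -u^(k+1))\<close> shows that a pair of germs \<open>(a(v) dv, b(u) du)\<close> lies in \<open>\<omega>\<close>
exactly when both have poles of order at most \<open>k + 1\<close> and opposite polar parts. Products of
\<open>m\<close> such pairs have poles of order at most \<open>m(k + 1)\<close>, and their coefficients agree up to the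
sign \<open>(-1)^m\<close> in all degrees \<open>\<le> k - m(k + 1)\<close>. For a global section of \<open>\<omega>^m\<close> this leaves
free exactly the coefficients of \<open>u\<^sub>0^n\<close> and of its mirror image on \<open>C\<^sub>2\<close> for
\<open>0 \<le> n \<le> m(k - 1)\<close>, and a window of \<open>2mk - 2k - 1\<close> coefficients on \<open>C\<^sub>1\<close>. These coordinate
functionals are biorthogonal to explicit monomial sections, which therefore form a basis with
\<open>(2m - 1)(2k - 1)\<close> elements; and each of these sections is a product of \<open>m\<close> monomial sections
of \<open>\<omega>\<close>, whence the surjectivity.\<close>

section \<open>Bases from biorthogonal functionals\<close>

context vector_space
begin

lemma span_and_dim_from_biorthogonal:
  assumes "finite J" "subspace V" "\<beta> ` J \<subseteq> V"
    and lin: "\<And>i. i \<in> J \<Longrightarrow> module_hom scale (*) (\<phi> i)"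
    and biorth: "\<And>i j. i \<in> J \<Longrightarrow> j \<in> J \<Longrightarrow> \<phi> i (\<beta> j) = (if i = j then 1 else 0)"
    and faithful: "\<And>x. x \<in> V \<Longrightarrow> \<forall>i\<in>J. \<phi> i x = 0 \<Longrightarrow> x = 0"
  shows "span (\<beta> ` J) = V \<and> dim V = card J"
proof -
  have inj: "inj_on \<beta> J"
  proof (rule inj_onI)
    fix i j assume "i \<in> J" "j \<in> J" "\<beta> i = \<beta> j"
    then show "i = j" using biorth[of i i] biorth[of i j] by (auto split: if_splits)
  qed
  have phi_sum: "\<phi> i (\<Sum>j\<in>J. c j *s \<beta> j) = c i" if "i \<in> J" for i c
  proof -
    interpret module_hom scale "(*)" "\<phi> i" by (rule lin[OF that])
    show ?thesis using that \<open>finite J\<close> by (simp add: sum scale biorth if_distrib cong: if_cong)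
  qed
  have "V \<subseteq> span (\<beta> ` J)"
  proof
    fix x assume x: "x \<in> V"
    let ?y = "x - (\<Sum>j\<in>J. \<phi> j x *s \<beta> j)"
    have "?y \<in> V"
      using assms(2,3) x by (intro subspace_diff subspace_sum subspace_scale) auto
    moreover have "\<phi> i ?y = 0" if "i \<in> J" for i
    proof -
      interpret module_hom scale "(*)" "\<phi> i" by (rule lin[OF that])
      show ?thesis using phi_sum[OF that] by (simp add: diff)
    qed
    ultimately have "?y = 0"
      using faithful by blast
    then have "x = (\<Sum>j\<in>J. \<phi> j x *s \<beta> j)"
      by simp
    also have "\<dots> \<in> span (\<beta> ` J)"
      by (intro span_sum span_scale span_base) auto
    finally show "x \<in> span (\<beta> ` J)" .
  qed
  then have span: "span (\<beta> ` J) = V"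
    using assms(2,3) span_minimal by blast
  have "independent (\<beta> ` J)"
    unfolding independent_explicit_module
  proof (intro allI impI)
    fix t u v assume t: "finite t" "t \<subseteq> \<beta> ` J" "(\<Sum>w\<in>t. u w *s w) = 0" and "v \<in> t"
    then obtain i where i: "i \<in> J" "v = \<beta> i" by auto
    interpret module_hom scale "(*)" "\<phi> i" by (rule lin[OF i(1)])
    have "\<phi> i w = (if w = v then 1 else 0)" if "w \<in> t" for w
      using that t(2) i inj biorth by (auto simp: inj_on_eq_iff)
    then have "\<phi> i (\<Sum>w\<in>t. u w *s w) = (\<Sum>w\<in>t. if w = v then u w else 0)"
      by (simp add: sum scale cong: sum.cong) (rule sum.cong; simp)
    then have "\<phi> i (\<Sum>w\<in>t. u w *s w) = u v"
      using t(1) \<open>v \<in> t\<close> by simp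
    then show "u v = 0" using t(3) by simp
  qed
  then have "dim V = card (\<beta> ` J)"
    using span by (metis dim_eq_card span_span)
  then show ?thesis
    using span card_image[OF inj] by simp
qed

end

definition lmon :: "int \<Rightarrow> lpoly" where
  "lmon e = (\<lambda>n. if n = e then 1 else 0)"

definition lprod :: "lpoly list \<Rightarrow> lpoly" where
  "lprod fs = foldr lmul fs lone"

lemma is_lpoly_single [simp]: "is_lpoly (\<lambda>n. if n = e then c else 0)"
  unfolding is_lpoly_def by (rule finite_subset[of _ "{e}"]) auto

lemma is_lpoly_lmon [simp]: "is_lpoly (lmon e)"
  unfolding lmon_def by simp

lemma is_lpoly_zero [simp]: "is_lpoly 0"
  unfolding is_lpoly_def by simp

lemma is_lpoly_lone [simp]: "is_lpoly lone"
  unfolding lone_def by simp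

lemma is_lpoly_add: "is_lpoly f \<Longrightarrow> is_lpoly g \<Longrightarrow> is_lpoly (f + g)"
  unfolding is_lpoly_def by (rule finite_subset[of _ "{n. f n \<noteq> 0} \<union> {n. g n \<noteq> 0}"]) auto

lemma is_lpoly_scale: "is_lpoly f \<Longrightarrow> is_lpoly (\<lambda>n. c * f n)"
  unfolding is_lpoly_def by (rule finite_subset[of _ "{n. f n \<noteq> 0}"]) auto

lemma is_lpoly_uminus: "is_lpoly f \<Longrightarrow> is_lpoly (- f)"
  unfolding is_lpoly_def by simp

lemma lmul_eq_sum_over:
  assumes "is_lpoly f" "finite S" "\<And>i. f i \<noteq> 0 \<Longrightarrow> g (n - i) \<noteq> 0 \<Longrightarrow> i \<in> S"
  shows "lmul f g n = (\<Sum>i\<in>S. f i * g (n - i))"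
proof -
  have "lmul f g n = (\<Sum>i\<in>{i. f i \<noteq> 0} \<inter> S. f i * g (n - i))"
    unfolding lmul_def using assms(1,3) unfolding is_lpoly_def
    by (intro sum.mono_neutral_right) auto
  also have "\<dots> = (\<Sum>i\<in>S. f i * g (n - i))"
    using assms(2) by (intro sum.mono_neutral_left) auto
  finally show ?thesis .
qed

lemma is_lpoly_lmul:
  assumes "is_lpoly f" "is_lpoly g"
  shows "is_lpoly (lmul f g)"
proof -
  let ?F = "{i. f i \<noteq> 0}" and ?G = "{j. g j \<noteq> 0}"
  have "{n. lmul f g n \<noteq> 0} \<subseteq> (\<lambda>(i, j). i + j) ` (?F \<times> ?G)"
  proof
    fix n assume "n \<in> {n. lmul f g n \<noteq> 0}"
    then obtain i where "i \<in> ?F" "f i * g (n - i) \<noteq> 0"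
      unfolding lmul_def by (auto elim: sum.not_neutral_contains_not_neutral)
    then show "n \<in> (\<lambda>(i, j). i + j) ` (?F \<times> ?G)"
      by (intro image_eqI[of _ _ "(i, n - i)"]) auto
  qed
  moreover have "finite ((\<lambda>(i, j). i + j) ` (?F \<times> ?G))"
    using assms unfolding is_lpoly_def by simp
  ultimately show ?thesis
    unfolding is_lpoly_def by (rule finite_subset)
qed

lemma lmul_single_left: "lmul (\<lambda>n. if n = e then c else 0) g = (\<lambda>n. c * g (n - e))"
  by (rule ext, subst lmul_eq_sum_over[where S = "{e}"]) (auto split: if_splits)

lemma lmul_lmon_lmon: "lmul (lmon a) (lmon b) = lmon (a + b)"
  unfolding lmon_def lmul_single_left by (auto simp: fun_eq_iff)

lemma lmul_zero_left [simp]: "lmul 0 g = 0"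
  unfolding lmul_def by (simp add: fun_eq_iff)

lemma lmul_zero_right [simp]: "lmul f 0 = 0"
  unfolding lmul_def by (simp add: fun_eq_iff)

lemma lmul_lone_right: "is_lpoly f \<Longrightarrow> lmul f lone = f"
  by (rule ext, subst lmul_eq_sum_over[where S = "{_}"]) (auto simp: lone_def split: if_splits)

lemma lmul_lconst: "lmul (lconst c) f = (\<lambda>n. c * f n)"
  unfolding lconst_def lmul_single_left by simp

lemma lmul_scale_left: "lmul (\<lambda>n. c * f n) g = (\<lambda>n. c * lmul f g n)"
  by (cases "c = 0") (simp_all add: lmul_def sum_distrib_left mult.assoc)

lemma lmul_vanishes_below:
  assumes "is_lpoly f" "\<And>i. i < - d \<Longrightarrow> f i = 0" "\<And>j. j < - e \<Longrightarrow> g j = 0" "n < - (d + e)"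
  shows "lmul f g n = 0"
proof -
  have "lmul f g n = (\<Sum>i\<in>{}. f i * g (n - i))"
    by (rule lmul_eq_sum_over) (use assms in \<open>force+\<close>)
  then show ?thesis by simp
qed

lemma is_lpoly_lprod: "\<forall>f\<in>set fs. is_lpoly f \<Longrightarrow> is_lpoly (lprod fs)"
  by (induction fs) (simp_all add: lprod_def is_lpoly_lmul)

lemma lprod_vanishes_neg:
  "\<forall>f\<in>set fs. is_lpoly f \<and> (\<forall>n<0. f n = 0) \<Longrightarrow> n < 0 \<Longrightarrow> lprod fs n = 0"
proof (induction fs arbitrary: n)
  case Nil
  then show ?case by (simp add: lprod_def lone_def)
next
  case (Cons f fs)
  then show ?case
    using lmul_vanishes_below[where f = f and g = "lprod fs" and d = 0 and e = 0] by (simp add: lprod_def)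
qed

lemma is_lpoly_at_inf: "is_lpoly f \<Longrightarrow> is_lpoly (at_inf m f)"
  unfolding is_lpoly_def at_inf_def
  by (rule finite_subset[of _ "(\<lambda>j. - j - 2 * int m) ` {n. f n \<noteq> 0}"])
     (auto intro!: image_eqI[where x = "- _ - 2 * int m"])

lemma at_inf_lmul:
  assumes f: "is_lpoly f" and g: "is_lpoly g"
  shows "lmul (at_inf p f) (at_inf q g) = at_inf (p + q) (lmul f g)"
proof
  fix n
  let ?S = "{j. f j \<noteq> 0}" and ?r = "\<lambda>j. - j - 2 * int p"
  have "lmul (at_inf p f) (at_inf q g) n = (\<Sum>i\<in>?r ` ?S. at_inf p f i * at_inf q g (n - i))"
    by (rule lmul_eq_sum_over[OF is_lpoly_at_inf[OF f]])
       (use f in \<open>auto simp: at_inf_def is_lpoly_def intro!: image_eqI[where x = "- _ - 2 * int p"]\<close>)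
  also have "\<dots> = (\<Sum>j\<in>?S. at_inf p f (?r j) * at_inf q g (n - ?r j))"
    by (subst sum.reindex) (auto simp: inj_on_def)
  also have "\<dots> = (\<Sum>j\<in>?S. (-1) ^ (p + q) * (f j * g (- n - 2 * int (p + q) - j)))"
    by (intro sum.cong refl) (simp add: at_inf_def power_add algebra_simps; rule arg_cong[where f = g]; simp)
  also have "\<dots> = at_inf (p + q) (lmul f g) n"
    unfolding at_inf_def lmul_def by (simp add: sum_distrib_left)
  finally show "lmul (at_inf p f) (at_inf q g) n = at_inf (p + q) (lmul f g) n" .
qed

lemma at_inf_lprod:
  "\<forall>f\<in>set fs. is_lpoly f \<Longrightarrow> at_inf (length fs) (lprod fs) = lprod (map (at_inf 1) fs)"
proof (induction fs)
  case Nil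
  then show ?case by (simp add: lprod_def at_inf_def lone_def fun_eq_iff)
next
  case (Cons f fs)
  have "at_inf (1 + length fs) (lmul f (lprod fs)) = lmul (at_inf 1 f) (at_inf (length fs) (lprod fs))"
    by (rule at_inf_lmul[symmetric]) (use Cons.prems in \<open>simp_all add: is_lpoly_lprod\<close>)
  with Cons show ?case by (simp add: lprod_def)
qed

lemma at_inf_add: "at_inf m (f + g) = at_inf m f + at_inf m g"
  unfolding at_inf_def by (simp add: fun_eq_iff algebra_simps)

lemma at_inf_scale: "at_inf m (\<lambda>n. c * f n) = (\<lambda>n. c * at_inf m f n)"
  unfolding at_inf_def by (simp add: fun_eq_iff algebra_simps)

lemma at_inf_zero [simp]: "at_inf m 0 = 0"
  unfolding at_inf_def by (simp add: fun_eq_iff)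

lemma at_inf_one_lmon: "at_inf 1 (lmon i) = - lmon (-2 - i)"
  unfolding at_inf_def lmon_def by (auto simp: fun_eq_iff)

section \<open>The local condition at a node\<close>

text \<open>Pole order at most \<open>d\<close> on both branches, and coefficients in degrees \<open>\<le> k - d\<close>
agreeing up to the factor \<open>s\<close>: the shape shared by the local ring (\<open>d = 0\<close>, \<open>s = 1\<close>),
by \<open>\<omega>\<close> (\<open>d = k + 1\<close>, \<open>s = -1\<close>) and by \<open>\<omega>^m\<close>.\<close>

definition node_cond :: "nat \<Rightarrow> int \<Rightarrow> complex \<Rightarrow> lpoly \<times> lpoly \<Rightarrow> bool" where
  "node_cond k d s x \<longleftrightarrow> is_lpoly (fst x) \<and> is_lpoly (snd x) \<and>
     (\<forall>n < - d. fst x n = 0 \<and> snd x n = 0) \<and>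
     (\<forall>n \<le> int k - d. fst x n = s * snd x n)"

lemma node_cond_zero: "node_cond k d s 0"
  unfolding node_cond_def by (simp add: zero_prod_def)

lemma node_cond_add: "node_cond k d s x \<Longrightarrow> node_cond k d s y \<Longrightarrow> node_cond k d s (x + y)"
  unfolding node_cond_def by (auto intro: is_lpoly_add simp: distrib_left)

lemma node_cond_pmul:
  assumes x: "node_cond k d1 s1 x" and y: "node_cond k d2 s2 y"
  shows "node_cond k (d1 + d2) (s1 * s2) (pmul x y)"
proof -
  obtain a b a' b' where xy: "x = (a, b)" "y = (a', b')" by fastforce
  have lp: "is_lpoly a" "is_lpoly b" "is_lpoly a'" "is_lpoly b'"
    using x y xy by (auto simp: node_cond_def)
  have low: "\<And>n. n < - d1 \<Longrightarrow> a n = 0" "\<And>n. n < - d1 \<Longrightarrow> b n = 0"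
    "\<And>n. n < - d2 \<Longrightarrow> a' n = 0" "\<And>n. n < - d2 \<Longrightarrow> b' n = 0"
    using x y xy by (auto simp: node_cond_def)
  have agree: "\<And>n. n \<le> int k - d1 \<Longrightarrow> a n = s1 * b n" "\<And>n. n \<le> int k - d2 \<Longrightarrow> a' n = s2 * b' n"
    using x y xy by (auto simp: node_cond_def)
  have window: "lmul a a' n = (s1 * s2) * lmul b b' n" if "n \<le> int k - (d1 + d2)" for n
  proof -
    have "lmul a a' n = (\<Sum>i\<in>{-d1..n+d2}. a i * a' (n - i))"
      by (rule lmul_eq_sum_over[OF lp(1)]) (use low in \<open>force+\<close>)
    also have "\<dots> = (s1 * s2) * (\<Sum>i\<in>{-d1..n+d2}. b i * b' (n - i))"
      unfolding sum_distrib_left by (intro sum.cong refl) (use that agree in auto)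
    also have "(\<Sum>i\<in>{-d1..n+d2}. b i * b' (n - i)) = lmul b b' n"
      by (rule lmul_eq_sum_over[OF lp(2), symmetric]) (use low in \<open>force+\<close>)
    finally show ?thesis .
  qed
  show ?thesis
    unfolding node_cond_def xy pmul_def
    using lp window lmul_vanishes_below[OF lp(1) low(1,3)] lmul_vanishes_below[OF lp(2) low(2,4)]
    by (auto intro: is_lpoly_lmul)
qed

lemma sing_ring_node_cond: "x \<in> sing_ring k \<Longrightarrow> node_cond k 0 1 x"
proof (induction rule: sing_ring.induct)
  case (add x y)
  then show ?case by (simp add: node_cond_add)
next
  case (mul x y)
  then show ?case using node_cond_pmul[of k 0 1 x 0 1 y] by simp
qed (auto simp: node_cond_def lconst_def lX_def intro: is_lpoly_uminus)

lemma lX_pair_in_sing_ring: "(lX j, lX j) \<in> sing_ring k"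
proof (induction j)
  case 0
  have "lconst 1 = lX 0" unfolding lconst_def lX_def by simp
  then show ?case using sing_ring.const[of 1 k] by simp
next
  case (Suc j)
  have "lmul (lX 1) (lX j) = lX (Suc j)"
    unfolding lX_def lmul_single_left by (auto simp: fun_eq_iff)
  then show ?case using sing_ring.mul[OF sing_ring.gen1 Suc] by (simp add: pmul_def)
qed

lemma neg_lX: "- lX j = (\<lambda>n. if n = int j then -1 else 0)"
  unfolding lX_def by (auto simp: fun_eq_iff)

lemma lX_antipair_in_sing_ring:
  assumes "j \<ge> k + 1" shows "(lX j, - lX j) \<in> sing_ring k"
proof -
  have "lmul (lX (k + 1)) (lX (j - (k + 1))) = lX j"
    "lmul (- lX (k + 1)) (lX (j - (k + 1))) = - lX j"
    using assms unfolding neg_lX unfolding lX_def lmul_single_left by (auto simp: fun_eq_iff)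
  then show ?thesis
    using sing_ring.mul[OF sing_ring.gen2 lX_pair_in_sing_ring, of k "j - (k + 1)"]
    by (simp add: pmul_def)
qed

lemma lres_lmul_lX: "lres (lmul (lX j) a) = a (-1 - int j)"
  unfolding lres_def lX_def lmul_single_left[where c = 1] by simp

lemma lres_lmul_neg_lX: "lres (lmul (- lX j) a) = - a (-1 - int j)"
  unfolding lres_def neg_lX lmul_single_left by simp

text \<open>Pairing against \<open>(v^j, u^j)\<close> and, for \<open>j > k\<close>, against \<open>(v^j, -u^j)\<close> forces the
coefficients of degree \<open>-1-j\<close> to be opposite, and to vanish when \<open>j > k\<close>.\<close>

lemma sing_omega_iff_node_cond: "x \<in> sing_omega k \<longleftrightarrow> node_cond k (int k + 1) (-1) x"
proof
  assume x: "x \<in> sing_omega k"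
  obtain a b where ab: "x = (a, b)" by fastforce
  have res: "\<And>f g. (f, g) \<in> sing_ring k \<Longrightarrow> lres (lmul f a) + lres (lmul g b) = 0"
    using x ab unfolding sing_omega_def by auto
  have opp: "a (-1 - int j) = - b (-1 - int j)" for j
    using res[OF lX_pair_in_sing_ring] by (simp add: lres_lmul_lX eq_neg_iff_add_eq_0)
  have equal: "a (-1 - int j) = b (-1 - int j)" if "j \<ge> k + 1" for j
    using res[OF lX_antipair_in_sing_ring[OF that]] by (simp add: lres_lmul_lX lres_lmul_neg_lX)
  have low: "a n = 0 \<and> b n = 0" if "n < - (int k + 1)" for n
  proof -
    have j: "k + 1 \<le> nat (-1 - n)" "-1 - int (nat (-1 - n)) = n" using that by auto
    show ?thesis using opp[of "nat (-1 - n)"] equal[OF j(1)] unfolding j(2) by simp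
  qed
  have "a n = - b n" if "n \<le> -1" for n
    using opp[of "nat (-1 - n)"] that by simp
  then show "node_cond k (int k + 1) (-1) x"
    using x ab low unfolding node_cond_def sing_omega_def by auto
next
  assume x: "node_cond k (int k + 1) (-1) x"
  obtain a b where ab: "x = (a, b)" by fastforce
  have lp: "is_lpoly a" "is_lpoly b"
    and low: "\<And>n. n < - (int k + 1) \<Longrightarrow> a n = 0 \<and> b n = 0"
    and polar: "\<And>n. n \<le> -1 \<Longrightarrow> a n = - b n"
    using x ab unfolding node_cond_def by auto
  have "lres (lmul f a) + lres (lmul g b) = 0" if fg: "(f, g) \<in> sing_ring k" for f g
  proof -
    have "is_lpoly f" "is_lpoly g" and fg_low: "\<And>n. n < 0 \<Longrightarrow> f n = 0 \<and> g n = 0"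
      and fg_eq: "\<And>n. n \<le> int k \<Longrightarrow> f n = g n"
      using sing_ring_node_cond[OF fg] unfolding node_cond_def by auto
    have "lres (lmul f a) = (\<Sum>i\<in>{0..int k}. f i * a (-1 - i))"
      unfolding lres_def by (rule lmul_eq_sum_over) (use \<open>is_lpoly f\<close> fg_low low in \<open>force+\<close>)
    moreover have "lres (lmul g b) = (\<Sum>i\<in>{0..int k}. g i * b (-1 - i))"
      unfolding lres_def by (rule lmul_eq_sum_over) (use \<open>is_lpoly g\<close> fg_low low in \<open>force+\<close>)
    moreover have "(\<Sum>i\<in>{0..int k}. f i * a (-1 - i)) = - (\<Sum>i\<in>{0..int k}. g i * b (-1 - i))"
      unfolding sum_negf[symmetric] by (intro sum.cong refl) (auto simp: fg_eq polar)
    ultimately show ?thesis by simp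
  qed
  then show "x \<in> sing_omega k"
    unfolding sing_omega_def ab using lp by auto
qed

lemma pprod_node_cond:
  "set xs \<subseteq> sing_omega k \<Longrightarrow> node_cond k (int (length xs) * (int k + 1)) ((-1) ^ length xs) (pprod xs)"
proof (induction xs)
  case Nil
  then show ?case by (auto simp: pprod_def node_cond_def lone_def)
next
  case (Cons x xs)
  then have "node_cond k ((int k + 1) + int (length xs) * (int k + 1)) ((-1) * (-1) ^ length xs)
      (pmul x (pprod xs))"
    by (intro node_cond_pmul) (auto simp: sing_omega_iff_node_cond)
  then show ?case by (simp add: pprod_def algebra_simps)
qed

lemma sing_omega_pow_node_cond:
  "x \<in> sing_omega_pow k m \<Longrightarrow> node_cond k (int m * (int k + 1)) ((-1) ^ m) x"
proof (induction rule: sing_omega_pow.induct)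
  case zero
  then show ?case by (rule node_cond_zero)
next
  case (add x y)
  then show ?case by (simp add: node_cond_add)
next
  case (gen r xs)
  then show ?case
    using node_cond_pmul[OF sing_ring_node_cond pprod_node_cond, of r k xs] by simp
qed

lemma pmul_lconst_one: "pmul (lconst 1, lconst 1) x = x"
  by (simp add: pmul_def lmul_lconst)

lemma pprod_in_sing_omega_pow:
  "length xs = m \<Longrightarrow> set xs \<subseteq> sing_omega k \<Longrightarrow> pprod xs \<in> sing_omega_pow k m"
  using sing_omega_pow.gen[OF sing_ring.const[where c = 1], of xs m]
  by (simp add: pmul_lconst_one)

lemma sing_omega_pow_one: "sing_omega_pow k 1 = sing_omega k"
proof (intro set_eqI iffI)
  fix x assume "x \<in> sing_omega_pow k 1"
  then show "x \<in> sing_omega k"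
    using sing_omega_pow_node_cond[of x k 1] by (simp add: sing_omega_iff_node_cond)
next
  fix x assume x: "x \<in> sing_omega k"
  then have "pprod [x] = x"
    by (cases x) (auto simp: pprod_def pmul_def sing_omega_def lmul_lone_right)
  then show "x \<in> sing_omega_pow k 1"
    using pprod_in_sing_omega_pow[of "[x]" 1 k] x by simp
qed

lemma sing_omega_pow_scale:
  "x \<in> sing_omega_pow k m \<Longrightarrow> pmul (lconst c, lconst c) x \<in> sing_omega_pow k m"
proof (induction rule: sing_omega_pow.induct)
  case zero
  then show ?case by (simp add: pmul_def zero_prod_def sing_omega_pow.zero[unfolded zero_prod_def])
next
  case (add x y)
  have "pmul (lconst c, lconst c) (x + y) = pmul (lconst c, lconst c) x + pmul (lconst c, lconst c) y"
    by (simp add: pmul_def lmul_lconst fun_eq_iff distrib_left)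
  then show ?case using add by (simp add: sing_omega_pow.add)
next
  case (gen r xs)
  have "pmul (lconst c, lconst c) (pmul r (pprod xs)) = pmul (pmul (lconst c, lconst c) r) (pprod xs)"
    by (simp add: pmul_def lmul_lconst lmul_scale_left)
  then show ?case
    using sing_omega_pow.gen[OF sing_ring.mul[OF sing_ring.const gen(1)] gen(2,3)] by simp
qed

section \<open>Global sections\<close>

lemma vector_space_tscale: "Vector_Spaces.vector_space tscale"
  by unfold_locales (simp_all add: tscale_def split_beta fun_eq_iff algebra_simps)

interpretation tv: vector_space tscale
  by (rule vector_space_tscale)

lemma H0_omega_pow_subspace: "tv.subspace (H0_omega_pow k m)"
proof (rule tv.subspaceI)
  show "0 \<in> H0_omega_pow k m"
    using sing_omega_pow.zero unfolding H0_omega_pow_def by (simp add: zero_prod_def)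
next
  have add_pair: "(a + a', b + b') \<in> sing_omega_pow k m"
    if "(a, b) \<in> sing_omega_pow k m" "(a', b') \<in> sing_omega_pow k m" for a b a' b'
    using sing_omega_pow.add[OF that] by simp
  fix x y assume "x \<in> H0_omega_pow k m" "y \<in> H0_omega_pow k m"
  then show "x + y \<in> H0_omega_pow k m"
    unfolding H0_omega_pow_def by (clarsimp simp: at_inf_add is_lpoly_add add_pair)
next
  fix c x assume "x \<in> H0_omega_pow k m"
  then show "tscale c x \<in> H0_omega_pow k m"
    unfolding H0_omega_pow_def tscale_def
    using sing_omega_pow_scale[of _ k m c]
    by (auto simp: at_inf_scale pmul_def lmul_lconst intro: is_lpoly_scale)
qed

lemma tprod_eq_lprod:
  "tprod xs = (lprod (map fst xs), lprod (map (fst \<circ> snd) xs), lprod (map (snd \<circ> snd) xs))"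
  by (induction xs) (auto simp: tprod_def lprod_def tmul_def)

lemma pprod_eq_lprod: "pprod ys = (lprod (map fst ys), lprod (map snd ys))"
  by (induction ys) (auto simp: pprod_def lprod_def pmul_def)

lemma mult_image_subset_H0: "mult_image k m \<subseteq> H0_omega_pow k m"
proof
  fix y assume "y \<in> mult_image k m"
  then obtain xs where y: "y = tprod xs" and len: "length xs = m" and xs: "set xs \<subseteq> H0_omega_pow k 1"
    unfolding mult_image_def by auto
  have sec: "is_lpoly a \<and> is_lpoly b \<and> is_lpoly c \<and> (\<forall>n<0. a n = 0) \<and> (\<forall>n<0. at_inf 1 c n = 0) \<and>
      (at_inf 1 a, b) \<in> sing_omega k \<and> (at_inf 1 b, c) \<in> sing_omega k" if "(a, b, c) \<in> set xs" for a b c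
    using xs that unfolding H0_omega_pow_def sing_omega_pow_one by auto
  let ?f0 = "map fst xs" and ?f1 = "map (fst \<circ> snd) xs" and ?f2 = "map (snd \<circ> snd) xs"
  have lp: "\<forall>f\<in>set ?f0. is_lpoly f" "\<forall>f\<in>set ?f1. is_lpoly f" "\<forall>f\<in>set ?f2. is_lpoly f"
    using sec by fastforce+
  have at_inf_f: "at_inf m (lprod ?f0) = lprod (map (at_inf 1) ?f0)"
      "at_inf m (lprod ?f1) = lprod (map (at_inf 1) ?f1)"
      "at_inf m (lprod ?f2) = lprod (map (at_inf 1) ?f2)"
    using at_inf_lprod[OF lp(1)] at_inf_lprod[OF lp(2)] at_inf_lprod[OF lp(3)] len by simp_all
  have node01: "(at_inf m (lprod ?f0), lprod ?f1) \<in> sing_omega_pow k m"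
    using pprod_in_sing_omega_pow[of "map (\<lambda>(a, b, c). (at_inf 1 a, b)) xs" m k] sec len
    unfolding at_inf_f pprod_eq_lprod by (force simp: comp_def split_beta)
  have node12: "(at_inf m (lprod ?f1), lprod ?f2) \<in> sing_omega_pow k m"
    using pprod_in_sing_omega_pow[of "map (\<lambda>(a, b, c). (at_inf 1 b, c)) xs" m k] sec len
    unfolding at_inf_f pprod_eq_lprod by (force simp: comp_def split_beta)
  have "\<forall>n<0. lprod ?f0 n = 0" "\<forall>n<0. lprod (map (at_inf 1) ?f2) n = 0"
    using sec by (auto intro!: lprod_vanishes_neg is_lpoly_at_inf)
  then show "y \<in> H0_omega_pow k m"
    unfolding y tprod_eq_lprod H0_omega_pow_def
    using lp node01 node12 at_inf_f by (simp add: is_lpoly_lprod)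
qed

lemma H0_omega_pow_local_conditions:
  assumes "(h0, h1, h2) \<in> H0_omega_pow k m"
  defines "D \<equiv> int m * (int k + 1)"
  shows "n < 0 \<Longrightarrow> h0 n = 0"
    and "n > - 2 * int m \<Longrightarrow> h2 n = 0"
    and "n < - D \<Longrightarrow> h0 (- n - 2 * int m) = 0 \<and> h1 n = 0"
    and "n < - D \<Longrightarrow> h1 (- n - 2 * int m) = 0 \<and> h2 n = 0"
    and "n \<le> int k - D \<Longrightarrow> h1 n = h0 (- n - 2 * int m)"
    and "n \<le> int k - D \<Longrightarrow> h1 (- n - 2 * int m) = h2 n"
proof -
  have H: "\<forall>n<0. h0 n = 0" "\<forall>n<0. at_inf m h2 n = 0"
    "(at_inf m h0, h1) \<in> sing_omega_pow k m" "(at_inf m h1, h2) \<in> sing_omega_pow k m"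
    using assms(1) unfolding H0_omega_pow_def by auto
  have node01: "node_cond k D ((-1) ^ m) (at_inf m h0, h1)"
    and node12: "node_cond k D ((-1) ^ m) (at_inf m h1, h2)"
    using sing_omega_pow_node_cond[OF H(3)] sing_omega_pow_node_cond[OF H(4)] unfolding D_def by auto
  show "n < 0 \<Longrightarrow> h0 n = 0" using H(1) by simp
  show "n > - 2 * int m \<Longrightarrow> h2 n = 0"
    using H(2) unfolding at_inf_def by (auto dest: spec[of _ "- n - 2 * int m"])
  show "n < - D \<Longrightarrow> h0 (- n - 2 * int m) = 0 \<and> h1 n = 0"
    using node01 unfolding node_cond_def at_inf_def by simp
  show "n < - D \<Longrightarrow> h1 (- n - 2 * int m) = 0 \<and> h2 n = 0"
    using node12 unfolding node_cond_def at_inf_def by simp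
  show "n \<le> int k - D \<Longrightarrow> h1 n = h0 (- n - 2 * int m)"
    using node01 unfolding node_cond_def at_inf_def by simp
  show "n \<le> int k - D \<Longrightarrow> h1 (- n - 2 * int m) = h2 n"
    using node12 unfolding node_cond_def at_inf_def by simp
qed

definition outer_range :: "nat \<Rightarrow> nat \<Rightarrow> int set" where
  "outer_range k m = {0 .. int m * (int k - 1)}"

definition mid_range :: "nat \<Rightarrow> nat \<Rightarrow> int set" where
  "mid_range k m = {int k + 1 - int m * (int k + 1) .. int m * (int k - 1) - int k - 1}"

lemma H0_omega_pow_coeffs:
  assumes "k \<ge> 2" "m \<ge> 2" "(h0, h1, h2) \<in> H0_omega_pow k m"
  shows "n \<notin> outer_range k m \<Longrightarrow> h0 n = 0"
    and "n \<notin> outer_range k m \<Longrightarrow> h2 (- n - 2 * int m) = 0"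
    and "n \<notin> mid_range k m \<Longrightarrow> h1 n = h0 (- n - 2 * int m) + h2 (- n - 2 * int m)"
proof -
  note F = H0_omega_pow_local_conditions[OF assms(3)]
  define P where "P = int m * int k"
  have "(int m - 1) * (int k - 1) \<ge> 1 * 1"
    using assms(1,2) by (intro mult_mono) auto
  then have mk: "P \<ge> int m + int k"
    unfolding P_def by (simp add: algebra_simps)
  have ranges: "int m * (int k - 1) = P - int m" "int m * (int k + 1) = P + int m"
    unfolding P_def by (simp_all add: algebra_simps)
  note F' = F[unfolded ranges]
  show "n \<notin> outer_range k m \<Longrightarrow> h0 n = 0"
    using F'(1)[of n] F'(3)[of "- n - 2 * int m"] mk unfolding outer_range_def ranges by force
  show "n \<notin> outer_range k m \<Longrightarrow> h2 (- n - 2 * int m) = 0"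
    using F'(2)[of "- n - 2 * int m"] F'(4)[of "- n - 2 * int m"] mk unfolding outer_range_def ranges by force
  assume "n \<notin> mid_range k m"
  then consider "n < - P - int m" | "- P - int m \<le> n" "n \<le> int k - P - int m"
    | "P - int m - int k \<le> n" "n \<le> P - int m" | "n > P - int m"
    unfolding mid_range_def ranges by fastforce
  then show "h1 n = h0 (- n - 2 * int m) + h2 (- n - 2 * int m)"
  proof cases
    case 1
    then show ?thesis using F'(2,3)[of n] F'(2)[of "- n - 2 * int m"] mk assms(2) by auto
  next
    case 2
    then have "n < 0" using mk assms(2) by linarith
    then show ?thesis using 2 F'(5)[of n] F'(2)[of "- n - 2 * int m"] by auto
  next
    case 3
    then show ?thesis using F'(6)[of "- n - 2 * int m"] F'(1)[of "- n - 2 * int m"] mk assms(2) by auto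
  next
    case 4
    then show ?thesis using F'(4)[of "- n - 2 * int m"] F'(1)[of "- n - 2 * int m"] mk assms(2) by auto
  qed
qed

section \<open>A basis of the sections\<close>

definition basis_index :: "nat \<Rightarrow> nat \<Rightarrow> (int + int + int) set" where
  "basis_index k m = outer_range k m <+> outer_range k m <+> mid_range k m"

text \<open>\<open>Inl n\<close>: \<open>u\<^sub>0^n du\<^sub>0^m\<close> continued across the first node; \<open>Inr (Inl n)\<close>: the mirror
image on \<open>C\<^sub>2\<close>, continued across the second node; \<open>Inr (Inr e)\<close>: \<open>u\<^sub>1^e du\<^sub>1^m\<close> on \<open>C\<^sub>1\<close> alone.\<close>

fun basis_vec :: "nat \<Rightarrow> int + int + int \<Rightarrow> lpoly \<times> lpoly \<times> lpoly" where
  "basis_vec m (Inl n) = (lmon n, lmon (- n - 2 * int m), 0)"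
| "basis_vec m (Inr (Inl n)) = (0, lmon n, lmon (- n - 2 * int m))"
| "basis_vec m (Inr (Inr e)) = (0, lmon e, 0)"

text \<open>The middle coordinate discounts the part of the \<open>C\<^sub>1\<close>-coefficient glued from \<open>C\<^sub>0\<close> and \<open>C\<^sub>2\<close>.\<close>

fun coord :: "nat \<Rightarrow> int + int + int \<Rightarrow> lpoly \<times> lpoly \<times> lpoly \<Rightarrow> complex" where
  "coord m (Inl n) x = fst x n"
| "coord m (Inr (Inl n)) x = snd (snd x) (- n - 2 * int m)"
| "coord m (Inr (Inr e)) x = fst (snd x) e - fst x (- e - 2 * int m) - snd (snd x) (- e - 2 * int m)"

lemma coord_basis_vec: "coord m i (basis_vec m j) = (if i = j then 1 else 0)"
  by (cases "(m, i)" rule: basis_vec.cases; cases "(m, j)" rule: basis_vec.cases) (auto simp: lmon_def)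

lemma module_hom_coord: "module_hom tscale (*) (coord m i)"
proof -
  have "module ((*) :: complex \<Rightarrow> complex \<Rightarrow> complex)"
    by unfold_locales (simp_all add: algebra_simps)
  then show ?thesis
    using tv.module_axioms
    by (cases "(m, i)" rule: basis_vec.cases) (auto simp: module_hom_iff tscale_def split_beta algebra_simps)
qed

lemma H0_omega_pow_eq_0_if_coords_vanish:
  assumes "k \<ge> 2" "m \<ge> 2" "x \<in> H0_omega_pow k m" "\<forall>i\<in>basis_index k m. coord m i x = 0"
  shows "x = 0"
proof -
  obtain h0 h1 h2 where x: "x = (h0, h1, h2)" by (cases x) auto
  note C = H0_omega_pow_coeffs[OF assms(1,2) assms(3)[unfolded x]]
  have h0: "h0 n = 0" for n
    using C(1)[of n] assms(4) unfolding x basis_index_def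
    by (cases "n \<in> outer_range k m") (auto dest!: bspec[of _ _ "Inl n"])
  have h2: "h2 n = 0" for n
    using C(2)[of "- n - 2 * int m"] assms(4) unfolding x basis_index_def
    by (cases "- n - 2 * int m \<in> outer_range k m") (auto dest!: bspec[of _ _ "Inr (Inl (- n - 2 * int m))"])
  have h1: "h1 n = 0" for n
    using C(3)[of n] assms(4) h0 h2 unfolding x basis_index_def
    by (cases "n \<in> mid_range k m") (auto dest!: bspec[of _ _ "Inr (Inr n)"])
  show ?thesis
    using h0 h1 h2 unfolding x by (simp add: zero_prod_def fun_eq_iff)
qed

lemma card_basis_index:
  assumes "k \<ge> 2" "m \<ge> 2"
  shows "card (basis_index k m) = (2 * m - 1) * (2 * k - 1)"
proof -
  obtain a b where "k = a + 2" "m = b + 2"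
    using assms by (metis add.commute le_Suc_ex)
  then show ?thesis
    unfolding basis_index_def outer_range_def mid_range_def
    by (simp add: card_Plus algebra_simps nat_add_distrib nat_mult_distrib)
qed

lemma tmul_basis_vec:
  "tmul (basis_vec p (Inl a)) (basis_vec q (Inl b)) = basis_vec (p + q) (Inl (a + b))"
  "tmul (basis_vec p (Inr (Inl a))) (basis_vec q (Inr (Inl b))) = basis_vec (p + q) (Inr (Inl (a + b)))"
  "tmul (basis_vec p (Inl a)) (basis_vec q (Inr (Inl b))) = basis_vec (p + q) (Inr (Inr (b - a - 2 * int p)))"
  "tmul (basis_vec p (Inl a)) (basis_vec q (Inr (Inr e))) = basis_vec (p + q) (Inr (Inr (e - a - 2 * int p)))"
  "tmul (basis_vec p (Inr (Inl a))) (basis_vec q (Inr (Inr e))) = basis_vec (p + q) (Inr (Inr (a + e)))"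
  by (simp_all add: tmul_def lmul_lmon_lmon algebra_simps)

lemma mem_H0_omega_pow_one:
  "(a, b, c) \<in> H0_omega_pow k 1 \<longleftrightarrow> is_lpoly a \<and> is_lpoly b \<and> is_lpoly c \<and>
     (\<forall>n<0. a n = 0) \<and> (\<forall>n<0. at_inf 1 c n = 0) \<and>
     node_cond k (int k + 1) (-1) (at_inf 1 a, b) \<and> node_cond k (int k + 1) (-1) (at_inf 1 b, c)"
  unfolding H0_omega_pow_def sing_omega_pow_one sing_omega_iff_node_cond by simp

lemma basis_vec_one_in_H0:
  assumes "0 \<le> n" "n \<le> int k - 1"
  shows "basis_vec 1 (Inl n) \<in> H0_omega_pow k 1" "basis_vec 1 (Inr (Inl n)) \<in> H0_omega_pow k 1"
  using assms unfolding basis_vec.simps mem_H0_omega_pow_one at_inf_one_lmon at_inf_zero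
  by (auto simp: node_cond_def lmon_def is_lpoly_uminus[of "lmon _", unfolded lmon_def])

lemma mult_image_one: "x \<in> H0_omega_pow k 1 \<Longrightarrow> x \<in> mult_image k 1"
  unfolding mult_image_def
  by (rule CollectI, rule exI[of _ "[x]"])
     (auto simp: tprod_def tmul_def H0_omega_pow_def lmul_lone_right)

lemma mult_image_Suc:
  "x \<in> H0_omega_pow k 1 \<Longrightarrow> y \<in> mult_image k m \<Longrightarrow> tmul x y \<in> mult_image k (Suc m)"
  unfolding mult_image_def by (force simp: tprod_def intro: exI[of _ "x # _"])

lemma outer_basis_vec_in_mult_image:
  assumes "k \<ge> 1" "m \<ge> 1" "n \<in> outer_range k m"
  shows "basis_vec m (Inl n) \<in> mult_image k m \<and> basis_vec m (Inr (Inl n)) \<in> mult_image k m"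
  using assms(2,3)
proof (induction m arbitrary: n rule: nat_induct_at_least)
  case base
  then show ?case
    using basis_vec_one_in_H0 mult_image_one unfolding outer_range_def by simp
next
  case (Suc m)
  define i where "i = min n (int k - 1)"
  have "int m * 1 \<le> int m * int k"
    using assms(1) by (intro mult_left_mono) auto
  then have i: "0 \<le> i" "i \<le> int k - 1" "n - i \<in> outer_range k m"
    using Suc.prems assms(1) unfolding i_def outer_range_def by (auto simp: algebra_simps min_def)
  have "basis_vec (Suc m) (Inl n) = tmul (basis_vec 1 (Inl i)) (basis_vec m (Inl (n - i)))"
    "basis_vec (Suc m) (Inr (Inl n)) = tmul (basis_vec 1 (Inr (Inl i))) (basis_vec m (Inr (Inl (n - i))))"
    unfolding tmul_basis_vec by simp_all
  then show ?case
    using Suc.IH[OF i(3)] basis_vec_one_in_H0[OF i(1,2)] by (simp add: mult_image_Suc)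
qed

lemma mid_basis_vec_two_in_mult_image:
  assumes "e \<in> mid_range k 2"
  shows "basis_vec 2 (Inr (Inr e)) \<in> mult_image k 2"
proof -
  define a b where "a = max 0 (-2 - e)" and "b = max 0 (e + 2)"
  have ab: "0 \<le> a" "a \<le> int k - 1" "0 \<le> b" "b \<le> int k - 1" "b - a - 2 = e"
    using assms unfolding a_def b_def mid_range_def by auto
  have "basis_vec 2 (Inr (Inr e)) = tmul (basis_vec 1 (Inl a)) (basis_vec 1 (Inr (Inl b)))"
    unfolding tmul_basis_vec using ab(5) by simp
  then show ?thesis
    using mult_image_Suc[OF basis_vec_one_in_H0(1)[OF ab(1,2)] mult_image_one[OF basis_vec_one_in_H0(2)[OF ab(3,4)]]]
    by (simp add: numeral_2_eq_2)
qed

lemma mid_basis_vec_in_mult_image: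
  assumes "k \<ge> 2" "m \<ge> 2" "e \<in> mid_range k m"
  shows "basis_vec m (Inr (Inr e)) \<in> mult_image k m"
  using assms(2,3)
proof (induction m arbitrary: e rule: nat_induct_at_least)
  case base
  then show ?case by (rule mid_basis_vec_two_in_mult_image)
next
  case (Suc m)
  define L U where "L = int k + 1 - int m * (int k + 1)" and "U = int m * (int k - 1) - int k - 1"
  have "int m * int k \<ge> 2 * int k"
    using Suc.hyps by (simp add: mult_right_mono)
  moreover have "U - L = 2 * (int m * int k) - 2 * int k - 2"
    unfolding L_def U_def by (simp add: algebra_simps)
  ultimately have LU: "L + 1 \<le> U"
    using assms(1) by linarith
  have e: "L - (int k + 1) \<le> e" "e \<le> U + int k - 1"
    using Suc.prems unfolding L_def U_def mid_range_def by (simp_all add: algebra_simps)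
  txt \<open>Split off a section of \<open>\<omega>\<close> supported on \<open>C\<^sub>1 \<union> C\<^sub>2\<close>, which raises the exponent
    on \<open>C\<^sub>1\<close> by \<open>c\<close>, or, below the range for \<open>m\<close>, one supported on \<open>C\<^sub>0 \<union> C\<^sub>1\<close>,
    which lowers it by \<open>i + 2\<close>.\<close>
  show ?case
  proof (cases "e \<ge> L")
    case True
    define c where "c = max 0 (e - U)"
    have c: "0 \<le> c" "c \<le> int k - 1" "e - c \<in> mid_range k m"
      using True e LU assms(1) unfolding c_def mid_range_def L_def[symmetric] U_def[symmetric] by auto
    have "basis_vec (Suc m) (Inr (Inr e)) = tmul (basis_vec 1 (Inr (Inl c))) (basis_vec m (Inr (Inr (e - c))))"
      unfolding tmul_basis_vec by simp
    then show ?thesis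
      using mult_image_Suc[OF basis_vec_one_in_H0(2)[OF c(1,2)] Suc.IH[OF c(3)]] by simp
  next
    case False
    define i where "i = max 0 (L - e - 2)"
    have i: "0 \<le> i" "i \<le> int k - 1" "e + 2 + i \<in> mid_range k m"
      using False e LU assms(1) unfolding i_def mid_range_def L_def[symmetric] U_def[symmetric] by auto
    have "basis_vec (Suc m) (Inr (Inr e)) = tmul (basis_vec 1 (Inl i)) (basis_vec m (Inr (Inr (e + 2 + i))))"
      unfolding tmul_basis_vec by simp
    then show ?thesis
      using mult_image_Suc[OF basis_vec_one_in_H0(1)[OF i(1,2)] Suc.IH[OF i(3)]] by simp
  qed
qed

lemma basis_vec_in_mult_image:
  assumes "k \<ge> 2" "m \<ge> 2" "i \<in> basis_index k m"
  shows "basis_vec m i \<in> mult_image k m"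
  using assms outer_basis_vec_in_mult_image[of k m] mid_basis_vec_in_mult_image[of k m]
  unfolding basis_index_def by auto

theorem lemma3p7:
  fixes k m :: nat
  assumes "k \<ge> 2" and "m \<ge> 2"
  shows "Vector_Spaces.vector_space tscale
         \<and> module.span tscale (mult_image k m) = H0_omega_pow k m
         \<and> vector_space.dim tscale (H0_omega_pow k m) = (2 * m - 1) * (2 * k - 1)"
proof -
  have basis: "basis_vec m ` basis_index k m \<subseteq> mult_image k m"
    using basis_vec_in_mult_image[OF assms] by blast
  have "tv.span (basis_vec m ` basis_index k m) = H0_omega_pow k m \<and>
      tv.dim (H0_omega_pow k m) = card (basis_index k m)"
  proof (rule tv.span_and_dim_from_biorthogonal[where \<phi> = "coord m"])
    show "finite (basis_index k m)"
      unfolding basis_index_def outer_range_def mid_range_def by simp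
    show "basis_vec m ` basis_index k m \<subseteq> H0_omega_pow k m"
      using basis mult_image_subset_H0 by blast
  qed (simp_all add: H0_omega_pow_subspace module_hom_coord coord_basis_vec
         H0_omega_pow_eq_0_if_coords_vanish[OF assms])
  moreover have "tv.span (mult_image k m) = H0_omega_pow k m"
    using calculation tv.span_mono[OF basis] tv.span_minimal[OF mult_image_subset_H0 H0_omega_pow_subspace]
    by blast
  ultimately show ?thesis
    using vector_space_tscale card_basis_index[OF assms] by simp
qed

end
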